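(* Suppose that a domain $\Omega\subset E_k$ is convex with respect to the set of directions $M_u$ and $f_u(E_k)=\mathbb{C}$ for all $u=1,\ldots,m$. Suppose that $\Phi:\Omega\to\mathbb{A}_n^m$ is monogenic in $\Omega$. If $\zeta_1,\zeta_2\in\Omega$ and $\zeta_2-\zeta_1\in M_u$ for some $u\in\{1,\ldots,m\}$, then $\Phi(\zeta_2)-\Phi(\zeta_1)\in\mathcal{I}_u$.
   Context: Fix integers $1\le m\le n$. $\mathbb{A}_n^m$ is an $n$-dimensional commutative associative algebra with unit over $\mathbb{C}$ having a basis $\{I_r\}_{r=1}^n$ with the multiplication rules: (1) for $r,s\in\{1,\ldots,m\}$: $I_rI_s=0$ if $r\ne s$ and $I_rI_r=I_r$; (2) for $r,s\in\{m+1,\ldots,n\}$: $I_rI_s=\sum_{p=\max\{r,s\}+1}^n\Upsilon^s_{r,p}I_p$ with $\Upsilon^s_{r,p}\in\mathbb{C}$; (3) for each $s\in\{m+1,\ldots,n\}$ there is a unique $u_s\in\{1,\ldots,m\}$ such that for all $r\in\{1,\ldots,m\}$: $I_rI_s=I_s$ if $r=u_s$ and $I_rI_s=0$ otherwise. The unit is $\sum_{u=1}^mI_u$. For $u=1,\ldots,m$, $\mathcal{I}_u=\{\sum_{r\ne u}\lambda_rI_r:\lambda_r\in\mathbb{C}\}$ is a maximal ideal and $f_u:\mathbb{A}_n^m\to\mathbb{C}$ is the linear functional $f_u(\sum_r\lambda_rI_r)=\lambda_u$. Let $2\le k\le 2n$ and let $e_1=1$, $e_j=\sum_{r=1}^n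 a_{jr}I_r$ ($j=2,\ldots,k$) be linearly independent over $\mathbb{R}$; $E_k$ is their real linear span, $\zeta=\sum_j x_je_j$ with $x_j\in\mathbb{R}$. $M_u:=\{\zeta\in E_k: f_u(\zeta)=0\}$. A domain $\Omega\subset E_k$ is convex with respect to the set of directions $M_u$ if for all $\zeta_1,\zeta_2\in\Omega$ with $\zeta_2-\zeta_1\in M_u$ the segment $\{\zeta_1+\alpha(\zeta_2-\zeta_1):\alpha\in[0,1]\}$ lies in $\Omega$. A continuous function $\Phi:\Omega\to\mathbb{A}_n^m$ is monogenic in $\Omega$ if for every $\zeta\in\Omega$ there is $\Phi'(\zeta)\in\mathbb{A}_n^m$ with $\lim_{\varepsilon\to0^+}(\Phi(\zeta+\varepsilon h)-\Phi(\zeta))\varepsilon^{-1}=h\Phi'(\zeta)$ for all $h\in E_k$ (Gateaux derivative). *)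

theory Defs
  imports "HOL-Analysis.Analysis"
begin

text \<open>Elements of the algebra A_n^m are coefficient functions nat => complex
  (coefficient of the basis vector I_r at index r), vanishing outside 1..n.
  The topology used is the product topology on nat => complex, which on the
  finite-dimensional set of such functions is the Euclidean topology.
  Y r s p stands for Upsilon^s_{r,p}; us s stands for u_s.\<close>

definition alg_carrier :: "nat \<Rightarrow> (nat \<Rightarrow> complex) set" where
  "alg_carrier n = {a. \<forall>p. p \<notin> {1..n} \<longrightarrow> a p = 0}"

definition basis_coeff ::
  "nat \<Rightarrow> nat \<Rightarrow> (nat \<Rightarrow> nat \<Rightarrow> nat \<Rightarrow> complex) \<Rightarrow> (nat \<Rightarrow> nat) \<Rightarrow> nat \<Rightarrow> nat \<Rightarrow> nat \<Rightarrow> complex" where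
  "basis_coeff n m Y us r s p =
     (if r \<le> m \<and> s \<le> m then (if r = s \<and> p = r then 1 else 0)
      else if m < r \<and> m < s then (if max r s < p \<and> p \<le> n then Y r s p else 0)
      else if r \<le> m then (if r = us s \<and> p = s then 1 else 0)
      else (if s = us r \<and> p = r then 1 else 0))"

definition alg_mult ::
  "nat \<Rightarrow> nat \<Rightarrow> (nat \<Rightarrow> nat \<Rightarrow> nat \<Rightarrow> complex) \<Rightarrow> (nat \<Rightarrow> nat) \<Rightarrow>
   (nat \<Rightarrow> complex) \<Rightarrow> (nat \<Rightarrow> complex) \<Rightarrow> (nat \<Rightarrow> complex)" where
  "alg_mult n m Y us a b = (\<lambda>p. if p \<in> {1..n} then
      (\<Sum>r\<in>{1..n}. \<Sum>s\<in>{1..n}. a r * b s * basis_coeff n m Y us r s p) else 0)"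

definition alg_unit :: "nat \<Rightarrow> (nat \<Rightarrow> complex)" where
  "alg_unit m = (\<lambda>p. if 1 \<le> p \<and> p \<le> m then 1 else 0)"

definition is_Anm :: "nat \<Rightarrow> nat \<Rightarrow> (nat \<Rightarrow> nat \<Rightarrow> nat \<Rightarrow> complex) \<Rightarrow> (nat \<Rightarrow> nat) \<Rightarrow> bool" where
  "is_Anm n m Y us \<longleftrightarrow> 1 \<le> m \<and> m \<le> n \<and>
     (\<forall>s\<in>{m+1..n}. us s \<in> {1..m}) \<and>
     (\<forall>a b. alg_mult n m Y us a b = alg_mult n m Y us b a) \<and>
     (\<forall>a b c. alg_mult n m Y us (alg_mult n m Y us a b) c =
              alg_mult n m Y us a (alg_mult n m Y us b c))"

definition f_fun :: "nat \<Rightarrow> (nat \<Rightarrow> complex) \<Rightarrow> complex" where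
  "f_fun u a = a u"

definition ideal_I :: "nat \<Rightarrow> nat \<Rightarrow> (nat \<Rightarrow> complex) set" where
  "ideal_I n u = {a \<in> alg_carrier n. a u = 0}"

definition lin_comb :: "nat \<Rightarrow> (nat \<Rightarrow> nat \<Rightarrow> complex) \<Rightarrow> (nat \<Rightarrow> real) \<Rightarrow> (nat \<Rightarrow> complex)" where
  "lin_comb k e x = (\<lambda>p. \<Sum>j\<in>{1..k}. complex_of_real (x j) * e j p)"

definition E_span :: "nat \<Rightarrow> (nat \<Rightarrow> nat \<Rightarrow> complex) \<Rightarrow> (nat \<Rightarrow> complex) set" where
  "E_span k e = {lin_comb k e x | x. True}"

definition M_dir :: "nat \<Rightarrow> (nat \<Rightarrow> nat \<Rightarrow> complex) \<Rightarrow> nat \<Rightarrow> (nat \<Rightarrow> complex) set" where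
  "M_dir k e u = {\<zeta> \<in> E_span k e. f_fun u \<zeta> = 0}"

definition convex_wrt :: "(nat \<Rightarrow> complex) set \<Rightarrow> (nat \<Rightarrow> complex) set \<Rightarrow> bool" where
  "convex_wrt \<Omega> M \<longleftrightarrow> (\<forall>\<zeta>1\<in>\<Omega>. \<forall>\<zeta>2\<in>\<Omega>. (\<lambda>p. \<zeta>2 p - \<zeta>1 p) \<in> M \<longrightarrow>
      (\<forall>\<alpha>\<in>{0..1::real}. (\<lambda>p. \<zeta>1 p + complex_of_real \<alpha> * (\<zeta>2 p - \<zeta>1 p)) \<in> \<Omega>))"

definition is_domain_in :: "(nat \<Rightarrow> complex) set \<Rightarrow> (nat \<Rightarrow> complex) set \<Rightarrow> bool" where
  "is_domain_in E \<Omega> \<longleftrightarrow> \<Omega> \<subseteq> E \<and> \<Omega> \<noteq> {} \<and> openin (top_of_set E) \<Omega> \<and> connected \<Omega>"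

text \<open>Monogenic (Gateaux differentiable) functions Omega -> A_n^m.
  The limit in A_n^m is taken coordinatewise (A_n^m is finite dimensional).\<close>
definition monogenic ::
  "nat \<Rightarrow> nat \<Rightarrow> (nat \<Rightarrow> nat \<Rightarrow> nat \<Rightarrow> complex) \<Rightarrow> (nat \<Rightarrow> nat) \<Rightarrow> nat \<Rightarrow> (nat \<Rightarrow> nat \<Rightarrow> complex)
   \<Rightarrow> (nat \<Rightarrow> complex) set \<Rightarrow> ((nat \<Rightarrow> complex) \<Rightarrow> (nat \<Rightarrow> complex)) \<Rightarrow> bool" where
  "monogenic n m Y us k e \<Omega> \<Phi> \<longleftrightarrow>
     (\<forall>\<zeta>\<in>\<Omega>. \<Phi> \<zeta> \<in> alg_carrier n) \<and> continuous_on \<Omega> \<Phi> \<and>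
     (\<forall>\<zeta>\<in>\<Omega>. \<exists>d \<in> alg_carrier n. \<forall>h\<in>E_span k e. \<forall>p.
        ((\<lambda>\<epsilon>::real. (\<Phi> (\<lambda>q. \<zeta> q + complex_of_real \<epsilon> * h q) p - \<Phi> \<zeta> p) / complex_of_real \<epsilon>)
          \<longlongrightarrow> alg_mult n m Y us h d p) (at_right 0))"

end

theory Submission
  imports Defs
begin

text \<open>Along a segment \<zeta>1 + t h with h \<in> M_u, the Gateaux derivative of \<Phi> in direction \<pm>h
  is h \<Phi>', whose u-th coordinate vanishes because I_u is an ideal. So both one-sided
  derivatives of t \<mapsto> f_u(\<Phi>(\<zeta>1 + t h)) vanish, and this continuous function is constant
  on [0, 1].\<close>

lemma alg_mult_coeff_eq_0:
  assumes "u \<in> {1..m}" "m \<le> n" "a u = 0"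
  shows "alg_mult n m Y us a d u = 0"
proof -
  have "a r * d s * basis_coeff n m Y us r s u = 0" for r s
    using assms by (cases "r = u") (auto simp: basis_coeff_def)
  then show ?thesis
    unfolding alg_mult_def by (simp add: sum.neutral)
qed

lemma E_span_uminus:
  assumes "h \<in> E_span k e"
  shows "(\<lambda>q. - h q) \<in> E_span k e"
proof -
  obtain x where "h = lin_comb k e x"
    using assms by (auto simp: E_span_def)
  then have "(\<lambda>q. - h q) = lin_comb k e (\<lambda>j. - x j)"
    by (auto simp: lin_comb_def sum_negf[symmetric])
  then show ?thesis
    by (auto simp: E_span_def)
qed

lemma has_derivative_zero_if_one_sided_quotients:
  fixes g :: "real \<Rightarrow> 'a::real_normed_field"
  assumes right: "((\<lambda>\<epsilon>. (g (x + \<epsilon>) - g x) / of_real \<epsilon>) \<longlongrightarrow> 0) (at_right 0)"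
    and left: "((\<lambda>\<epsilon>. (g (x - \<epsilon>) - g x) / of_real \<epsilon>) \<longlongrightarrow> 0) (at_right 0)"
  shows "(g has_derivative (\<lambda>_. 0)) (at x)"
proof -
  define R where "R = (\<lambda>\<epsilon>. (g (x + \<epsilon>) - g x) / of_real \<epsilon>)"
  have "R (- \<epsilon>) = - ((g (x - \<epsilon>) - g x) / of_real \<epsilon>)" for \<epsilon>
    by (simp add: R_def)
  then have "(R \<longlongrightarrow> 0) (at_left 0)"
    using tendsto_minus[OF left] by (simp add: filterlim_at_left_to_right[of R])
  with right have "(R \<longlongrightarrow> 0) (at 0)"
    by (simp add: R_def filterlim_split_at_real)
  then have "((\<lambda>\<epsilon>. norm (R \<epsilon>)) \<longlongrightarrow> 0) (at 0)"
    by (rule tendsto_norm_zero)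
  moreover have "norm (R \<epsilon>) = norm (g (x + \<epsilon>) - g x - 0) / norm \<epsilon>" for \<epsilon>
    by (simp add: R_def norm_divide)
  ultimately show ?thesis
    by (simp add: has_derivative_at)
qed

lemma monogenic_coeff_quotient_tendsto_0:
  assumes mono: "monogenic n m Y us k e \<Omega> \<Phi>" and "\<zeta> \<in> \<Omega>"
    and hE: "h \<in> E_span k e" and hu: "h u = 0" and u: "u \<in> {1..m}" and mn: "m \<le> n"
  shows "((\<lambda>\<epsilon>::real. (\<Phi> (\<lambda>q. \<zeta> q + of_real \<epsilon> * h q) u - \<Phi> \<zeta> u) / of_real \<epsilon>) \<longlongrightarrow> 0)
           (at_right 0)"
proof -
  obtain d where "\<forall>h\<in>E_span k e. \<forall>p.
      ((\<lambda>\<epsilon>::real. (\<Phi> (\<lambda>q. \<zeta> q + of_real \<epsilon> * h q) p - \<Phi> \<zeta> p) / of_real \<epsilon>)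
        \<longlongrightarrow> alg_mult n m Y us h d p) (at_right 0)"
    using mono \<open>\<zeta> \<in> \<Omega>\<close> unfolding monogenic_def by blast
  with hE have "((\<lambda>\<epsilon>::real. (\<Phi> (\<lambda>q. \<zeta> q + of_real \<epsilon> * h q) u - \<Phi> \<zeta> u) / of_real \<epsilon>)
      \<longlongrightarrow> alg_mult n m Y us h d u) (at_right 0)"
    by blast
  then show ?thesis
    by (simp only: alg_mult_coeff_eq_0[of u m n h, OF u mn hu])
qed

lemma monogenic_coeff_const_on_segment:
  assumes mono: "monogenic n m Y us k e \<Omega> \<Phi>"
    and seg: "\<And>t. t \<in> {0..1} \<Longrightarrow> (\<lambda>q. \<zeta> q + of_real t * h q) \<in> \<Omega>"
    and hE: "h \<in> E_span k e" and hu: "h u = 0" and u: "u \<in> {1..m}" and mn: "m \<le> n"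
  shows "\<Phi> (\<lambda>q. \<zeta> q + h q) u = \<Phi> \<zeta> u"
proof -
  define z where "z = (\<lambda>t::real. \<lambda>q. \<zeta> q + of_real t * h q)"
  define g where "g = (\<lambda>t. \<Phi> (z t) u)"
  have "continuous_on {0..1} (\<Phi> \<circ> z)"
  proof (rule continuous_on_compose)
    show "continuous_on {0..1} z"
      unfolding z_def by (intro continuous_on_coordinatewise_then_product continuous_intros)
    show "continuous_on (z ` {0..1}) \<Phi>"
      using mono seg by (auto simp: monogenic_def z_def intro: continuous_on_subset)
  qed
  then have cont: "continuous_on {0..1} g"
    using continuous_on_product_then_coordinatewise[of "{0..1}" "\<Phi> \<circ> z" u]
    by (simp add: g_def o_def)
  have "(g has_derivative (\<lambda>_. 0)) (at t)" if "t \<in> {0..1}" for t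
  proof (rule has_derivative_zero_if_one_sided_quotients)
    have zt: "z t \<in> \<Omega>"
      using seg that by (simp add: z_def)
    have right: "z (t + \<epsilon>) = (\<lambda>q. z t q + of_real \<epsilon> * h q)" for \<epsilon>
      by (auto simp: z_def algebra_simps)
    show "((\<lambda>\<epsilon>. (g (t + \<epsilon>) - g t) / of_real \<epsilon>) \<longlongrightarrow> 0) (at_right 0)"
      unfolding g_def right by (rule monogenic_coeff_quotient_tendsto_0[OF mono zt hE hu u mn])
    have left: "z (t - \<epsilon>) = (\<lambda>q. z t q + of_real \<epsilon> * - h q)" for \<epsilon>
      by (auto simp: z_def algebra_simps)
    show "((\<lambda>\<epsilon>. (g (t - \<epsilon>) - g t) / of_real \<epsilon>) \<longlongrightarrow> 0) (at_right 0)"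
      unfolding g_def left
      by (rule monogenic_coeff_quotient_tendsto_0[OF mono zt E_span_uminus[OF hE] _ u mn])
        (simp add: hu)
  qed
  then have "g 1 = g 0"
    using has_derivative_zero_unique_strong_interval[of "{}" 0 1 g "g 0" 1] cont
    by (auto intro: has_derivative_at_withinI)
  then show ?thesis
    by (simp add: g_def z_def)
qed

theorem lemma2:
  fixes n m k :: nat
    and Y :: "nat \<Rightarrow> nat \<Rightarrow> nat \<Rightarrow> complex"
    and us :: "nat \<Rightarrow> nat"
    and e :: "nat \<Rightarrow> nat \<Rightarrow> complex"
    and \<Omega> :: "(nat \<Rightarrow> complex) set"
    and \<Phi> :: "(nat \<Rightarrow> complex) \<Rightarrow> (nat \<Rightarrow> complex)"
    and \<zeta>1 \<zeta>2 :: "nat \<Rightarrow> complex"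
    and u :: nat
  assumes alg: "is_Anm n m Y us"
    and k_bounds: "2 \<le> k" "k \<le> 2 * n"
    and e1: "e 1 = alg_unit m"
    and e_in: "\<forall>j\<in>{1..k}. e j \<in> alg_carrier n"
    and e_indep: "\<forall>x. lin_comb k e x = (\<lambda>p. 0) \<longrightarrow> (\<forall>j\<in>{1..k}. x j = 0)"
    and dom: "is_domain_in (E_span k e) \<Omega>"
    and conv: "\<forall>v\<in>{1..m}. convex_wrt \<Omega> (M_dir k e v)"
    and surj_f: "\<forall>v\<in>{1..m}. f_fun v ` E_span k e = UNIV"
    and mono: "monogenic n m Y us k e \<Omega> \<Phi>"
    and z1: "\<zeta>1 \<in> \<Omega>" and z2: "\<zeta>2 \<in> \<Omega>"
    and u: "u \<in> {1..m}"
    and diff: "(\<lambda>p. \<zeta>2 p - \<zeta>1 p) \<in> M_dir k e u"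
  shows "(\<lambda>p. \<Phi> \<zeta>2 p - \<Phi> \<zeta>1 p) \<in> ideal_I n u"
proof -
  define h where "h = (\<lambda>p. \<zeta>2 p - \<zeta>1 p)"
  have mn: "m \<le> n"
    using alg by (simp add: is_Anm_def)
  have hE: "h \<in> E_span k e" and hu: "h u = 0"
    using diff by (auto simp: h_def M_dir_def f_fun_def)
  have "(\<lambda>q. \<zeta>1 q + of_real t * h q) \<in> \<Omega>" if "t \<in> {0..1}" for t
    using conv u z1 z2 diff that unfolding convex_wrt_def h_def by blast
  from monogenic_coeff_const_on_segment[OF mono this hE hu u mn]
  have "\<Phi> \<zeta>2 u = \<Phi> \<zeta>1 u"
    by (simp add: h_def)
  moreover have "\<Phi> \<zeta>1 \<in> alg_carrier n" "\<Phi> \<zeta>2 \<in> alg_carrier n"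
    using mono z1 z2 by (auto simp: monogenic_def)
  ultimately show ?thesis
    by (auto simp: ideal_I_def alg_carrier_def)
qed

end
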